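(* Let $G=(V,E)$ be a finite connected graph, let $\varepsilon>0$ and $\rho\ge1$. There exist a vertex $v_0\in V$ and positive real numbers $(\omega_v)_{v\in V}$ such that: for every $v\in V\setminus\{v_0\}$ there is a neighbour $u$ of $v$ with $\omega_v\le\varepsilon\,\omega_u^\rho$; $\omega_{v_0}>1/2$; and $\sum_{v\in V}\omega_v=1$.
   Context: Two vertices $u,v$ are neighbours if $uv$ is an edge; a graph is connected if any two vertices are joined by a path of edges. *)

theory Defs
  imports Main Complex_Main
begin

definition finite_graph :: "'a set \<Rightarrow> ('a \<Rightarrow> 'a \<Rightarrow> bool) \<Rightarrow> bool" where
  "finite_graph V E \<longleftrightarrow> finite V \<and>
     (\<forall>u v. E u v \<longrightarrow> u \<in> V \<and> v \<in> V) \<and>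
     (\<forall>u v. E u v \<longrightarrow> E v u) \<and> (\<forall>v. \<not> E v v)"

definition connected_graph :: "'a set \<Rightarrow> ('a \<Rightarrow> 'a \<Rightarrow> bool) \<Rightarrow> bool" where
  "connected_graph V E \<longleftrightarrow> V \<noteq> {} \<and> (\<forall>u\<in>V. \<forall>v\<in>V. E\<^sup>*\<^sup>* u v)"

end

theory Submission
  imports Defs
begin

text \<open>Order the vertices by their graph distance from a base vertex \<open>v0\<close> and give a vertex
  at distance \<open>k \<ge> 1\<close> the weight \<open>b k\<close> of a sequence decaying so fast that
  \<open>b (k+1) \<le> \<epsilon> b k ^ \<rho>\<close> and \<open>b k \<le> 1/(2 |V|)\<close>. Every vertex \<open>v \<noteq> v0\<close> has a neighbour one
  step closer to \<open>v0\<close>, which witnesses the growth condition, and the weights off \<open>v0\<close> sum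
  to less than \<open>1/2\<close>, so \<open>v0\<close> can take the remaining mass.\<close>

definition dist_from :: "('a \<Rightarrow> 'a \<Rightarrow> bool) \<Rightarrow> 'a \<Rightarrow> 'a \<Rightarrow> nat" where
  "dist_from E v0 v = (LEAST n. (E ^^ n) v0 v)"

lemma dist_from_self [simp]: "dist_from E v0 v0 = 0"
  unfolding dist_from_def by (rule Least_eq_0) simp

lemma relpowp_dist_from:
  assumes "E\<^sup>*\<^sup>* v0 v"
  shows "(E ^^ dist_from E v0 v) v0 v"
  using assms unfolding dist_from_def by (metis LeastI rtranclp_power)

lemma dist_from_le: "(E ^^ n) v0 v \<Longrightarrow> dist_from E v0 v \<le> n"
  unfolding dist_from_def by (rule Least_le)

lemma dist_from_predecessor:
  assumes "E\<^sup>*\<^sup>* v0 v" and "v \<noteq> v0"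
  obtains u where "E u v" and "dist_from E v0 v = Suc (dist_from E v0 u)"
proof -
  have path: "(E ^^ dist_from E v0 v) v0 v"
    using assms(1) by (rule relpowp_dist_from)
  with assms(2) obtain k where k: "dist_from E v0 v = Suc k"
    by (cases "dist_from E v0 v") auto
  with path obtain u where u: "(E ^^ k) v0 u" "E u v"
    by auto
  have "dist_from E v0 u \<le> k"
    using u(1) by (rule dist_from_le)
  moreover have "(E ^^ Suc (dist_from E v0 u)) v0 v"
    using relpowp_dist_from[OF relpowp_imp_rtranclp[OF u(1)]] u(2) by auto
  then have "dist_from E v0 v \<le> Suc (dist_from E v0 u)"
    by (rule dist_from_le)
  ultimately show thesis
    using that u(2) k by simp
qed

lemma dist_from_pos: "E\<^sup>*\<^sup>* v0 v \<Longrightarrow> v \<noteq> v0 \<Longrightarrow> dist_from E v0 v \<ge> 1"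
  by (erule dist_from_predecessor) simp_all

fun decay_seq :: "real \<Rightarrow> real \<Rightarrow> real \<Rightarrow> nat \<Rightarrow> real" where
  "decay_seq e r N 0 = 1/2"
| "decay_seq e r N (Suc k) = min (decay_seq e r N k) (e * decay_seq e r N k powr r) / N"

context
  fixes e r N :: real
  assumes e_pos: "e > 0" and N_ge_1: "N \<ge> 1"
begin

lemma decay_seq_pos: "decay_seq e r N k > 0"
  using e_pos N_ge_1 by (induction k) auto

lemma decay_seq_Suc_le:
  "decay_seq e r N (Suc k) \<le> decay_seq e r N k / N"
  "decay_seq e r N (Suc k) \<le> e * decay_seq e r N k powr r"
proof -
  define m where "m = min (decay_seq e r N k) (e * decay_seq e r N k powr r)"
  have "m \<ge> 0"
    using decay_seq_pos[of k] e_pos unfolding m_def by simp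
  then have "m / N \<le> m"
    using N_ge_1 by (simp add: divide_le_eq mult_le_cancel_left1)
  then show "decay_seq e r N (Suc k) \<le> e * decay_seq e r N k powr r"
    unfolding m_def by simp
  show "decay_seq e r N (Suc k) \<le> decay_seq e r N k / N"
    using N_ge_1 by (simp add: divide_right_mono)
qed

lemma decay_seq_antimono: "j \<le> k \<Longrightarrow> decay_seq e r N k \<le> decay_seq e r N j"
proof (induction k rule: dec_induct)
  case (step k)
  have "decay_seq e r N (Suc k) \<le> decay_seq e r N k / N"
    by (rule decay_seq_Suc_le(1))
  also have "\<dots> \<le> decay_seq e r N k"
    using decay_seq_pos[of k] N_ge_1 by (simp add: divide_le_eq)
  finally show ?case
    using step.IH by simp
qed simp

lemma sum_decay_seq_lt_half:
  assumes "finite A" and "real (card A) < N" and "\<And>v. v \<in> A \<Longrightarrow> f v \<ge> 1"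
  shows "(\<Sum>v\<in>A. decay_seq e r N (f v)) < 1/2"
proof -
  have "decay_seq e r N (f v) \<le> 1 / (2 * N)" if "v \<in> A" for v
    using decay_seq_antimono[OF assms(3)[OF that]] decay_seq_Suc_le(1)[of 0] by simp
  then have "(\<Sum>v\<in>A. decay_seq e r N (f v)) \<le> real (card A) * (1 / (2 * N))"
    by (rule sum_bounded_above)
  also have "\<dots> < 1/2"
    using assms(2) N_ge_1 by (simp add: field_simps)
  finally show ?thesis .
qed

end

theorem lemma2p9:
  fixes V :: "'a set" and E :: "'a \<Rightarrow> 'a \<Rightarrow> bool" and \<epsilon> \<rho> :: real
  assumes "finite_graph V E" and "connected_graph V E"
    and "\<epsilon> > 0" and "\<rho> \<ge> 1"
  shows "\<exists>v0 \<in> V. \<exists>\<omega> :: 'a \<Rightarrow> real.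
           (\<forall>v\<in>V. \<omega> v > 0) \<and>
           (\<forall>v\<in>V - {v0}. \<exists>u. E v u \<and> \<omega> v \<le> \<epsilon> * \<omega> u powr \<rho>) \<and>
           \<omega> v0 > 1/2 \<and>
           (\<Sum>v\<in>V. \<omega> v) = 1"
proof -
  have fin: "finite V" and sym: "\<And>u v. E u v \<Longrightarrow> E v u"
    using assms(1) unfolding finite_graph_def by auto
  obtain v0 where v0: "v0 \<in> V" and reach: "\<And>v. v \<in> V \<Longrightarrow> E\<^sup>*\<^sup>* v0 v"
    using assms(2) unfolding connected_graph_def by auto
  define N where "N = real (card V)"
  have N: "N \<ge> 1" and card_lt: "real (card (V - {v0})) < N"
    using fin v0 card_gt_0_iff[of V] unfolding N_def by (auto simp: of_nat_diff)
  define b where "b = decay_seq \<epsilon> \<rho> N \<circ> dist_from E v0"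
  define S where "S = (\<Sum>v\<in>V - {v0}. b v)"
  have "S < 1/2"
    unfolding S_def b_def o_def using reach dist_from_pos[of E v0]
    by (intro sum_decay_seq_lt_half[OF assms(3) N fin[THEN finite_Diff] card_lt]) auto
  define \<omega> where "\<omega> = b(v0 := 1 - S)"
  have b_pos: "b v > 0" for v
    unfolding b_def by (simp add: decay_seq_pos[OF assms(3) N])
  have b_le_\<omega>: "b v \<le> \<omega> v" for v
    using \<open>S < 1/2\<close> unfolding \<omega>_def b_def by simp
  have growth: "\<exists>u. E v u \<and> \<omega> v \<le> \<epsilon> * \<omega> u powr \<rho>" if v: "v \<in> V - {v0}" for v
  proof -
    obtain u where "E u v" and d: "dist_from E v0 v = Suc (dist_from E v0 u)"
      using v reach dist_from_predecessor[of E v0 v] by blast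
    have "\<omega> v \<le> \<epsilon> * b u powr \<rho>"
      using v d decay_seq_Suc_le(2)[OF assms(3) N] unfolding \<omega>_def b_def by simp
    also have "\<dots> \<le> \<epsilon> * \<omega> u powr \<rho>"
      using b_le_\<omega> b_pos[of u] assms(3,4) by (intro mult_left_mono powr_mono2) auto
    finally show ?thesis
      using sym[OF \<open>E u v\<close>] by blast
  qed
  have "(\<Sum>v\<in>V. \<omega> v) = 1"
    using fin v0 unfolding S_def \<omega>_def by (simp add: sum.remove)
  moreover have "\<omega> v0 > 1/2" and "\<forall>v\<in>V. \<omega> v > 0"
    using \<open>S < 1/2\<close> b_pos unfolding \<omega>_def by auto
  ultimately show ?thesis
    using growth v0 by blast
qed

end
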